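(* Let $U$ be a nonempty subset of $\mathbb{Q}[[t]]$ and let $\mathbf{g}=(g_i(t))_{i=0}^\infty$ be any sequence of elements of $U$ (repetitions allowed). Then for each $n\ge1$, $$\sum_{k=1}^n\alpha_k(U,\mathbf{g})\ge\sum_{k=1}^n\alpha_k(U),$$ where $\alpha_k(U,\mathbf{g}):=\sum_{j=0}^{k-1}\operatorname{ord}_t(g_k(t)-g_j(t))$. Moreover, given a fixed $N\ge1$, equality holds for all $0\le n\le N$ whenever $(g_i(t))_{i=0}^N$ is the initial part of a $t$-ordering of $U$.
   Context: $\mathbb{Q}[[t]]$ is the ring of formal power series over $\mathbb{Q}$, and $\operatorname{ord}_t(f)$ is the largest $\alpha\in\mathbb{N}$ with $t^\alpha\mid f$, $\operatorname{ord}_t(0)=+\infty$. For nonempty $U\subseteq\mathbb{Q}[[t]]$, a $t$-ordering of $U$ is a sequence $(f_i(t))_{i\ge0}$ of elements of $U$ where $f_0\in U$ is arbitrary and for each $k\ge1$, $f_k$ minimizes $\sum_{j=0}^{k-1}\operatorname{ord}_t(f_k(t)-f_j(t))$ over elements of $U$. The $t$-exponent sequence of $U$ is $\alpha_k(U):=\sum_{j=0}^{k-1}\operatorname{ord}_t(f_k(t)-f_j(t))$ for any $t$-ordering of $U$; this value does not depend on the choice of $t$-ordering. *)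

theory Defs
  imports "HOL-Computational_Algebra.Formal_Power_Series" "HOL-Library.Extended_Nat"
begin

definition ordt :: "rat fps \<Rightarrow> enat" where
  "ordt f = (if f = 0 then \<infinity> else enat (subdegree f))"

definition alpha_seq :: "(nat \<Rightarrow> rat fps) \<Rightarrow> nat \<Rightarrow> enat" where
  "alpha_seq g k = (\<Sum>j<k. ordt (g k - g j))"

definition t_ordering :: "rat fps set \<Rightarrow> (nat \<Rightarrow> rat fps) \<Rightarrow> bool" where
  "t_ordering U f \<longleftrightarrow> (\<forall>i. f i \<in> U) \<and>
     (\<forall>k\<ge>1. \<forall>h\<in>U. (\<Sum>j<k. ordt (f k - f j)) \<le> (\<Sum>j<k. ordt (h - f j)))"

definition t_exponent :: "rat fps set \<Rightarrow> nat \<Rightarrow> enat" where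
  "t_exponent U k = alpha_seq (SOME f. t_ordering U f) k"

end

theory Submission
  imports Defs
begin

(* If g takes a value twice among g_0, ..., g_n, some alpha_k(U, g) with k <= n is
   infinite. Otherwise alpha_1(U, g) + ... + alpha_n(U, g) is half the sum of ord_t(x - y) over
   the ordered pairs of distinct points of S = {g_0, ..., g_n}, so it depends only on S. For a
   t-ordering f, twice the corresponding sum for f is bounded by this pair sum, by removing one
   point of S at a time: any finite S with more than k points contains a point s with
   sum_{j<k} ord_t(s - f_j) <= sum_{x in S - {s}} ord_t(s - x). Such an s is found by descending
   through the t-adic balls: at each depth, pass to a residue class of the next coefficient in
   which S has more points than the family f_0, ..., f_{k-1} (pigeonhole). Since ord_t(s - x)
   counts the balls around s that contain x, summing over the depths gives the inequality.
   Equality for initial segments of t-orderings follows by applying the inequality both ways. *)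

unbundle fps_syntax

lemma ex_fibre_card_less:
  assumes "finite A" "finite B" "card A < card B"
  shows "\<exists>b\<in>B. card {a \<in> A. \<phi> a = \<psi> b} < card {b' \<in> B. \<psi> b' = \<psi> b}"
proof (rule ccontr)
  assume contra: "\<not> ?thesis"
  have le: "card {b' \<in> B. \<psi> b' = c} \<le> card {a \<in> A. \<phi> a = c}" if "c \<in> \<psi> ` B" for c
    using contra that by force
  have "card B = (\<Sum>c\<in>\<psi> ` B. card {b \<in> B. \<psi> b = c})"
    using assms(2) sum.group[of B "\<psi> ` B" \<psi> "\<lambda>_. 1::nat"] by simp
  also have "\<dots> \<le> (\<Sum>c\<in>\<psi> ` B. card {a \<in> A. \<phi> a = c})"
    using le by (rule sum_mono)
  also have "\<dots> = (\<Sum>c\<in>\<psi> ` B. card {a \<in> {a \<in> A. \<phi> a \<in> \<psi> ` B}. \<phi> a = c})"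
    by (intro sum.cong refl arg_cong[where f = card]) auto
  also have "\<dots> = card {a \<in> A. \<phi> a \<in> \<psi> ` B}"
    using assms(1,2) sum.group[of "{a \<in> A. \<phi> a \<in> \<psi> ` B}" "\<psi> ` B" \<phi> "\<lambda>_. 1::nat"]
    by auto
  also have "\<dots> \<le> card A"
    using assms(1) by (intro card_mono) auto
  finally show False
    using assms(3) by simp
qed

lemma sum_off_diagonal_symmetric:
  fixes a :: "nat \<Rightarrow> nat \<Rightarrow> 'a::comm_semiring_1"
  assumes "\<And>i j. a i j = a j i"
  shows "(\<Sum>k\<le>n. \<Sum>j\<in>{..n} - {k}. a k j) = 2 * (\<Sum>k\<le>n. \<Sum>j<k. a k j)"
proof -
  have split: "{..n} - {k} = {j \<in> {..n}. j < k} \<union> {j \<in> {..n}. k < j}" for k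
    by (auto simp: linorder_neq_iff)
  have "(\<Sum>j\<in>{..n} - {k}. a k j)
      = (\<Sum>j\<in>{j \<in> {..n}. j < k}. a k j) + (\<Sum>j\<in>{j \<in> {..n}. k < j}. a k j)" for k
    unfolding split by (rule sum.union_disjoint) auto
  moreover have "(\<Sum>k\<le>n. \<Sum>j\<in>{j \<in> {..n}. k < j}. a k j)
      = (\<Sum>j\<le>n. \<Sum>k\<in>{k \<in> {..n}. k < j}. a k j)"
    by (rule sum.swap_restrict) auto
  moreover have "{j \<in> {..n}. j < k} = {..<k}" if "k \<le> n" for k
    using that by auto
  ultimately show ?thesis
    using assms by (simp add: sum.distrib mult_2)
qed

lemma enat_eq_card_below:
  assumes "e < enat M"
  shows "e = enat (card {m \<in> {1..M}. enat m \<le> e})"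
proof -
  obtain d where d: "e = enat d" "d < M"
    using assms by (cases e) auto
  then have "{m \<in> {1..M}. enat m \<le> e} = {1..d}"
    by auto
  then show ?thesis
    using d by simp
qed

lemma enat_mult_2_cancel_le: "2 * (a :: enat) \<le> 2 * b \<Longrightarrow> a \<le> b"
  by (cases a; cases b) (auto simp: numeral_eq_enat)

definition fps_agree :: "nat \<Rightarrow> 'a fps \<Rightarrow> 'a fps \<Rightarrow> bool" where
  "fps_agree m x y \<longleftrightarrow> (\<forall>i<m. x $ i = y $ i)"

lemma fps_agree_refl [simp]: "fps_agree m x x"
  by (simp add: fps_agree_def)

lemma fps_agree_sym: "fps_agree m x y \<Longrightarrow> fps_agree m y x"
  by (simp add: fps_agree_def)

lemma fps_agree_trans: "fps_agree m x y \<Longrightarrow> fps_agree m y z \<Longrightarrow> fps_agree m x z"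
  by (simp add: fps_agree_def)

lemma fps_agree_mono: "fps_agree m x y \<Longrightarrow> m' \<le> m \<Longrightarrow> fps_agree m' x y"
  by (simp add: fps_agree_def)

lemma fps_agree_Suc: "fps_agree (Suc m) x y \<longleftrightarrow> fps_agree m x y \<and> x $ m = y $ m"
  by (auto simp: fps_agree_def less_Suc_eq)

lemma finite_set_fps_agree_separates:
  assumes "finite S"
  obtains M where "\<And>x y. x \<in> S \<Longrightarrow> y \<in> S \<Longrightarrow> x \<noteq> y \<Longrightarrow> \<not> fps_agree M x y"
proof -
  have separate: "eventually (\<lambda>M. x \<noteq> y \<longrightarrow> \<not> fps_agree M x y) sequentially" for x y :: "'a fps"
  proof (cases "x = y")
    case False
    then obtain i where "x $ i \<noteq> y $ i"
      using fps_ext by blast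
    then show ?thesis
      unfolding eventually_sequentially fps_agree_def by (metis Suc_le_lessD)
  qed simp
  have "eventually (\<lambda>M. \<forall>p \<in> S \<times> S. fst p \<noteq> snd p \<longrightarrow> \<not> fps_agree M (fst p) (snd p)) sequentially"
    using assms separate by (intro eventually_ball_finite) auto
  then show ?thesis
    using that unfolding eventually_sequentially by fastforce
qed

lemma ordt_minus_commute: "ordt (x - y) = ordt (y - x)"
  by (simp add: ordt_def)

lemma fps_agree_iff_ordt: "fps_agree m x y \<longleftrightarrow> enat m \<le> ordt (x - y)"
proof (cases "x = y")
  case False
  have "fps_agree m x y \<longleftrightarrow> (\<forall>i<m. (x - y) $ i = 0)"
    by (simp add: fps_agree_def)
  also have "\<dots> \<longleftrightarrow> m \<le> subdegree (x - y)"
    using False by (metis nth_less_subdegree_zero order.trans not_le right_minus_eq subdegree_geI)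
  finally show ?thesis
    using False by (simp add: ordt_def)
qed (simp add: ordt_def)

lemma sum_ordt_eq_sum_card_fps_agree:
  assumes "finite A" and "\<And>a. a \<in> A \<Longrightarrow> \<not> fps_agree M (G a) s"
  shows "(\<Sum>a\<in>A. ordt (s - G a)) = enat (\<Sum>m\<in>{1..M}. card {a \<in> A. fps_agree m (G a) s})"
proof -
  have "ordt (s - G a) = enat (card {m \<in> {1..M}. fps_agree m (G a) s})" if "a \<in> A" for a
    using enat_eq_card_below[of "ordt (G a - s)" M] assms(2)[OF that]
    by (simp add: fps_agree_iff_ordt ordt_minus_commute not_le)
  then have "(\<Sum>a\<in>A. ordt (s - G a)) = enat (\<Sum>a\<in>A. card {m \<in> {1..M}. fps_agree m (G a) s})"
    by (simp add: of_nat_eq_enat [symmetric])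
  also have "(\<Sum>a\<in>A. card {m \<in> {1..M}. fps_agree m (G a) s})
      = (\<Sum>m\<in>{1..M}. card {a \<in> A. fps_agree m (G a) s})"
    using assms(1) by (intro sum_multicount_gen) auto
  finally show ?thesis .
qed

lemma ex_point_balls_outweigh:
  fixes S :: "'a fps set" and F :: "'j \<Rightarrow> 'a fps"
  assumes "finite S" "finite J" "card J < card S"
  shows "\<exists>s\<in>S. \<forall>m'\<le>m. card {j \<in> J. fps_agree m' (F j) s} < card {x \<in> S. fps_agree m' x s}"
proof (induction m)
  case 0
  obtain s where "s \<in> S"
    using assms(3) by fastforce
  then show ?case
    using assms(3) by (auto simp: fps_agree_def)
next
  case (Suc m)
  then obtain s where "s \<in> S"
    and outweigh: "\<forall>m'\<le>m. card {j \<in> J. fps_agree m' (F j) s} < card {x \<in> S. fps_agree m' x s}"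
    by blast
  define A where "A = {j \<in> J. fps_agree m (F j) s}"
  define B where "B = {x \<in> S. fps_agree m x s}"
  obtain s' where "s' \<in> B"
    and fibre: "card {j \<in> A. F j $ m = s' $ m} < card {x \<in> B. x $ m = s' $ m}"
    using ex_fibre_card_less[of A B "\<lambda>j. F j $ m" "\<lambda>x. x $ m"] outweigh assms(1,2)
    unfolding A_def B_def by auto
  then have "s' \<in> S" and s's: "fps_agree m s' s"
    by (auto simp: B_def)
  have same_balls: "fps_agree m' z s' \<longleftrightarrow> fps_agree m' z s" if "m' \<le> m" for m' z
    using fps_agree_mono[OF s's that]
    by (meson fps_agree_sym fps_agree_trans)
  have "card {j \<in> J. fps_agree m' (F j) s'} < card {x \<in> S. fps_agree m' x s'}"
    if "m' \<le> Suc m" for m'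
  proof (cases "m' = Suc m")
    case True
    have "{j \<in> J. fps_agree m' (F j) s'} = {j \<in> A. F j $ m = s' $ m}"
      "{x \<in> S. fps_agree m' x s'} = {x \<in> B. x $ m = s' $ m}"
      unfolding True A_def B_def fps_agree_Suc using same_balls by auto
    then show ?thesis
      using fibre by simp
  next
    case False
    then show ?thesis
      using outweigh same_balls that by simp
  qed
  then show ?case
    using \<open>s' \<in> S\<close> by blast
qed

lemma ex_point_sum_ordt_family_le_set:
  fixes S :: "rat fps set" and F :: "'j \<Rightarrow> rat fps"
  assumes "finite S" "finite J" "card J < card S"
  shows "\<exists>s\<in>S. (\<Sum>j\<in>J. ordt (s - F j)) \<le> (\<Sum>x\<in>S - {s}. ordt (s - x))"
proof -
  obtain M where separated: "\<And>x y. x \<in> S \<Longrightarrow> y \<in> S \<Longrightarrow> x \<noteq> y \<Longrightarrow> \<not> fps_agree M x y"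
    using finite_set_fps_agree_separates[OF assms(1)] by blast
  obtain s where "s \<in> S"
    and outweigh: "\<forall>m\<le>M. card {j \<in> J. fps_agree m (F j) s} < card {x \<in> S. fps_agree m x s}"
    using ex_point_balls_outweigh[OF assms] by blast
  have "{x \<in> S. fps_agree M x s} = {s}"
    using \<open>s \<in> S\<close> separated by auto
  then have F_separated: "\<not> fps_agree M (F j) s" if "j \<in> J" for j
    using outweigh that assms(2) by auto
  have le: "card {j \<in> J. fps_agree m (F j) s} \<le> card {x \<in> S - {s}. fps_agree m x s}"
    if "m \<le> M" for m
  proof -
    have "{x \<in> S - {s}. fps_agree m x s} = {x \<in> S. fps_agree m x s} - {s}"
      by auto
    then have "card {x \<in> S - {s}. fps_agree m x s} = card {x \<in> S. fps_agree m x s} - 1"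
      using \<open>s \<in> S\<close> by (simp only: card_Diff_singleton mem_Collect_eq fps_agree_refl)
    then show ?thesis
      using outweigh that by fastforce
  qed
  have "(\<Sum>j\<in>J. ordt (s - F j)) = enat (\<Sum>m\<in>{1..M}. card {j \<in> J. fps_agree m (F j) s})"
    using assms(2) F_separated by (rule sum_ordt_eq_sum_card_fps_agree)
  also have "\<dots> \<le> enat (\<Sum>m\<in>{1..M}. card {x \<in> S - {s}. fps_agree m x s})"
    using le by (auto intro: sum_mono)
  also have "\<dots> = (\<Sum>x\<in>S - {s}. ordt (s - x))"
    using assms(1) separated \<open>s \<in> S\<close>
    by (intro sum_ordt_eq_sum_card_fps_agree[symmetric]) auto
  finally show ?thesis
    using \<open>s \<in> S\<close> by blast
qed

definition pair_ordt_sum :: "rat fps set \<Rightarrow> enat" where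
  "pair_ordt_sum S = (\<Sum>x\<in>S. \<Sum>y\<in>S - {x}. ordt (x - y))"

lemma pair_ordt_sum_remove:
  assumes "finite S" "s \<in> S"
  shows "pair_ordt_sum S = pair_ordt_sum (S - {s}) + 2 * (\<Sum>y\<in>S - {s}. ordt (s - y))"
proof -
  have insert_s: "S - {x} = insert s (S - {s} - {x})" if "x \<in> S - {s}" for x
    using that assms(2) by auto
  have "pair_ordt_sum S
      = (\<Sum>y\<in>S - {s}. ordt (s - y)) + (\<Sum>x\<in>S - {s}. \<Sum>y\<in>S - {x}. ordt (x - y))"
    unfolding pair_ordt_sum_def by (rule sum.remove[OF assms])
  also have "(\<Sum>x\<in>S - {s}. \<Sum>y\<in>S - {x}. ordt (x - y))
      = (\<Sum>x\<in>S - {s}. ordt (x - s) + (\<Sum>y\<in>S - {s} - {x}. ordt (x - y)))"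
    using assms(1) by (intro sum.cong refl) (simp add: insert_s)
  also have "\<dots> = (\<Sum>y\<in>S - {s}. ordt (s - y)) + pair_ordt_sum (S - {s})"
    by (simp add: pair_ordt_sum_def sum.distrib ordt_minus_commute[of _ s])
  finally show ?thesis
    by (simp add: mult_2 add.assoc add.commute)
qed

lemma t_ordering_in: "t_ordering U f \<Longrightarrow> f i \<in> U"
  by (simp add: t_ordering_def)

lemma t_ordering_alpha_le:
  "t_ordering U f \<Longrightarrow> k \<ge> 1 \<Longrightarrow> h \<in> U \<Longrightarrow> alpha_seq f k \<le> (\<Sum>j<k. ordt (h - f j))"
  by (simp add: t_ordering_def alpha_seq_def)

lemma t_ordering_sum_alpha_le_pair_ordt_sum:
  assumes "t_ordering U f" "finite S" "S \<subseteq> U" "card S = Suc n"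
  shows "2 * (\<Sum>k=1..n. alpha_seq f k) \<le> pair_ordt_sum S"
  using assms(2-)
proof (induction n arbitrary: S)
  case (Suc n)
  then obtain s where "s \<in> S"
    and cheap: "(\<Sum>j<Suc n. ordt (s - f j)) \<le> (\<Sum>x\<in>S - {s}. ordt (s - x))"
    using ex_point_sum_ordt_family_le_set[of S "{..<Suc n}" f] by auto
  moreover have "s \<in> U"
    using Suc.prems(2) \<open>s \<in> S\<close> by auto
  ultimately have "alpha_seq f (Suc n) \<le> (\<Sum>x\<in>S - {s}. ordt (s - x))"
    using t_ordering_alpha_le[OF assms(1), of "Suc n" s] by simp
  moreover have "2 * (\<Sum>k=1..n. alpha_seq f k) \<le> pair_ordt_sum (S - {s})"
    using Suc.IH[of "S - {s}"] Suc.prems \<open>s \<in> S\<close> by auto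
  ultimately have "2 * (\<Sum>k=1..n. alpha_seq f k) + 2 * alpha_seq f (Suc n)
      \<le> pair_ordt_sum (S - {s}) + 2 * (\<Sum>x\<in>S - {s}. ordt (s - x))"
    by (intro add_mono mult_left_mono) auto
  then show ?case
    using pair_ordt_sum_remove[OF Suc.prems(1) \<open>s \<in> S\<close>] by (simp add: distrib_left)
qed simp

lemma sum_alpha_seq_atMost: "(\<Sum>k\<le>n. alpha_seq g k) = (\<Sum>k=1..n. alpha_seq g k)"
  by (simp add: atMost_atLeast0 sum.atLeast_Suc_atMost alpha_seq_def)

lemma pair_ordt_sum_image:
  assumes "inj_on g {..n}"
  shows "pair_ordt_sum (g ` {..n}) = 2 * (\<Sum>k=1..n. alpha_seq g k)"
proof -
  have "(\<Sum>y\<in>g ` {..n} - {g k}. ordt (g k - y)) = (\<Sum>j\<in>{..n} - {k}. ordt (g k - g j))"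
    if "k \<le> n" for k
  proof -
    have "g ` {..n} - {g k} = g ` ({..n} - {k})"
      using assms that by (auto simp: inj_on_def)
    moreover have "inj_on g ({..n} - {k})"
      using assms by (rule inj_on_subset) auto
    ultimately show ?thesis
      by (simp add: sum.reindex)
  qed
  then have "pair_ordt_sum (g ` {..n}) = (\<Sum>k\<le>n. \<Sum>j\<in>{..n} - {k}. ordt (g k - g j))"
    unfolding pair_ordt_sum_def by (simp add: sum.reindex[OF assms])
  also have "\<dots> = 2 * (\<Sum>k\<le>n. \<Sum>j<k. ordt (g k - g j))"
    by (rule sum_off_diagonal_symmetric) (rule ordt_minus_commute)
  finally show ?thesis
    unfolding sum_alpha_seq_atMost[symmetric] by (simp only: alpha_seq_def[abs_def])
qed

lemma sum_alpha_seq_eq_infinity: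
  assumes "i < j" "j \<le> n" "g i = g j"
  shows "(\<Sum>k=1..n. alpha_seq g k) = \<infinity>"
proof -
  have "\<infinity> = ordt (g j - g i)"
    using assms(3) by (simp add: ordt_def)
  also have "\<dots> \<le> alpha_seq g j"
    unfolding alpha_seq_def using assms(1) by (intro member_le_sum) auto
  also have "\<dots> \<le> (\<Sum>k=1..n. alpha_seq g k)"
    using assms(1,2) by (intro member_le_sum) auto
  finally show ?thesis
    by (simp add: top.extremum_unique)
qed

lemma t_ordering_sum_alpha_le:
  assumes "t_ordering U f" "\<forall>i. g i \<in> U"
  shows "(\<Sum>k=1..n. alpha_seq f k) \<le> (\<Sum>k=1..n. alpha_seq g k)"
proof (cases "inj_on g {..n}")
  case True
  have "2 * (\<Sum>k=1..n. alpha_seq f k) \<le> pair_ordt_sum (g ` {..n})"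
    using assms True by (intro t_ordering_sum_alpha_le_pair_ordt_sum) (auto simp: card_image)
  also have "\<dots> = 2 * (\<Sum>k=1..n. alpha_seq g k)"
    using True by (rule pair_ordt_sum_image)
  finally show ?thesis
    by (rule enat_mult_2_cancel_le)
next
  case False
  then obtain i j where "i \<le> n" "j \<le> n" "i \<noteq> j" "g i = g j"
    unfolding inj_on_def by auto
  then have "(\<Sum>k=1..n. alpha_seq g k) = \<infinity>"
    by (metis sum_alpha_seq_eq_infinity linorder_neqE_nat)
  then show ?thesis
    by simp
qed

fun greedy_t_ordering :: "rat fps set \<Rightarrow> nat \<Rightarrow> rat fps" where
  "greedy_t_ordering U k = (SOME h. h \<in> U \<and> (\<forall>h'\<in>U.
     (\<Sum>j<k. ordt (h - greedy_t_ordering U j)) \<le> (\<Sum>j<k. ordt (h' - greedy_t_ordering U j))))"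

declare greedy_t_ordering.simps [simp del]

lemma t_ordering_greedy:
  assumes "U \<noteq> {}"
  shows "t_ordering U (greedy_t_ordering U)"
  unfolding t_ordering_def
proof (intro allI conjI)
  fix k
  define cost where "cost h = (\<Sum>j<k. ordt (h - greedy_t_ordering U j))" for h
  define v where "v = (LEAST v. \<exists>h\<in>U. v = cost h)"
  have "\<exists>h\<in>U. v = cost h"
    unfolding v_def by (rule LeastI_ex) (use assms in blast)
  then obtain h where "h \<in> U" "cost h = v"
    by auto
  moreover have "v \<le> cost h'" if "h' \<in> U" for h'
    unfolding v_def using that by (blast intro: Least_le)
  ultimately have "\<exists>h. h \<in> U \<and> (\<forall>h'\<in>U. cost h \<le> cost h')"
    by auto
  from someI_ex[OF this]
  have "greedy_t_ordering U k \<in> U \<and> (\<forall>h'\<in>U. cost (greedy_t_ordering U k) \<le> cost h')"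
    unfolding cost_def greedy_t_ordering.simps[of U k, symmetric] .
  then show "greedy_t_ordering U k \<in> U"
    and "k \<ge> 1 \<longrightarrow> (\<forall>h\<in>U. cost (greedy_t_ordering U k) \<le> cost h)"
    by auto
qed

lemma sum_alpha_seq_cong:
  "(\<And>i. i \<le> n \<Longrightarrow> g i = h i) \<Longrightarrow> (\<Sum>k=1..n. alpha_seq g k) = (\<Sum>k=1..n. alpha_seq h k)"
  by (auto simp: alpha_seq_def intro!: sum.cong)

theorem theorem4p10:
  fixes U :: "rat fps set" and g :: "nat \<Rightarrow> rat fps"
  assumes "U \<noteq> {}" and "\<forall>i. g i \<in> U"
  shows "(\<forall>n\<ge>1. (\<Sum>k=1..n. alpha_seq g k) \<ge> (\<Sum>k=1..n. t_exponent U k))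
    \<and> (\<forall>N\<ge>1. (\<exists>f. t_ordering U f \<and> (\<forall>i\<le>N. g i = f i)) \<longrightarrow>
          (\<forall>n\<le>N. (\<Sum>k=1..n. alpha_seq g k) = (\<Sum>k=1..n. t_exponent U k)))"
proof -
  define f where "f = (SOME f. t_ordering U f)"
  have f: "t_ordering U f"
    unfolding f_def by (rule someI[of "t_ordering U", OF t_ordering_greedy[OF assms(1)]])
  have t_exponent: "t_exponent U = alpha_seq f"
    unfolding t_exponent_def f_def ..
  have minimal: "(\<Sum>k=1..n. t_exponent U k) \<le> (\<Sum>k=1..n. alpha_seq g k)" for n
    unfolding t_exponent using f assms(2) by (rule t_ordering_sum_alpha_le)
  have "(\<Sum>k=1..n. alpha_seq g k) = (\<Sum>k=1..n. t_exponent U k)"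
    if h: "t_ordering U h" and "\<forall>i\<le>N. g i = h i" "n \<le> N" for h N n
  proof -
    have "(\<Sum>k=1..n. alpha_seq g k) = (\<Sum>k=1..n. alpha_seq h k)"
      using that by (intro sum_alpha_seq_cong) auto
    also have "\<dots> \<le> (\<Sum>k=1..n. t_exponent U k)"
      unfolding t_exponent using h by (rule t_ordering_sum_alpha_le) (simp add: t_ordering_in[OF f])
    finally show ?thesis
      using minimal antisym by blast
  qed
  then show ?thesis
    using minimal by blast
qed

end
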